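(* Let $d\ge 1$, let $p_0$ be a probability measure on $\mathbb R^d$, let $N\ge1$, let $0=\tau_0<\tau_1<\cdots<\tau_N=1$ be a grid with $\Delta_i=\tau_{i+1}-\tau_i$, and let $D_2=\sum_{i=0}^{N-1}\Delta_i^2$. For $i=0,\ldots,N-1$ let $A_i:\mathbb R^d\to[0,\infty)$ be measurable with $\mathcal A_i:=\mathbb E_{x_0\sim p_0}[A_i(x_0)]<\infty$. Fix $\varepsilon_a>0$ and nonnegative smoothing weights $K_\sigma(i,\ell)$, $i,\ell\in\{0,\ldots,N-1\}$, with $\sum_{\ell}K_\sigma(i,\ell)=1$ for every $i$. Fix $0<\omega<1/N$ and let $\mathcal W_\omega=\{w\in\mathbb R^N: w_i\ge\omega\ \forall i,\ \sum_i w_i=1\}$. Let $M\ge1$ and let $x_0^{(1)},\ldots,x_0^{(M)}$ be calibration samples. Define $\widehat{\mathcal A}_i=\frac1M\sum_{m=1}^M A_i(x_0^{(m)})$, $\widehat g_i=\sqrt{\widehat{\mathcal A}_i+\varepsilon_a}$, $\widehat b_i=\sum_\ell K_\sigma(i,\ell)\widehat g_\ell$, $\widehat\phi_i=\widehat b_i^2$, and the calibrated schedule $\widehat w_i=\Delta_i\widehat b_i/\sum_\ell\Delta_\ell\widehat b_\ell$. Define the population analogues $g_i^\star=\sqrt{\mathcal A_i+\varepsilon_a}$, $b_i^\star=\sum_\ell K_\sigma(i,\ell)g_\ell^\star$, $\phi_i^\star=(b_i^\star)^2$. Define $$\mathcal J(w)=\sum_{i=0}^{N-1}\frac{\mathcal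 A_i\Delta_i^2}{w_i},\qquad \mathcal J_{\sigma,\varepsilon_a}(w)=\sum_{i=0}^{N-1}\frac{\phi_i^\star\Delta_i^2}{w_i},\qquad \beta_{\sigma,\varepsilon_a}=\max_{0\le i\le N-1}|\phi_i^\star-\mathcal A_i|,$$ and let $w^\star\in\arg\min_{w\in\mathcal W_\omega}\mathcal J(w)$. Let $T:\mathbb R^d\to\mathbb R^d$ be a measurable map (the exact learned flow map) and $\mu_1=T_\#p_0$. For each $w\in\mathcal W_\omega$ let $T_w:\mathbb R^d\to\mathbb R^d$ be a measurable map (the terminal output of the Euler sampler using schedule $w$) and $\mu_w=(T_w)_\#p_0$; for the random schedule $\widehat w$, $\mu_{\widehat w}$ denotes the law of $T_{\widehat w}(x_0)$ for a fresh $x_0\sim p_0$ independent of the calibration samples. Let $B>0$ (the Euler budget) and $C_{\rm Eul}>0$. Assume: (A1) $x_0^{(1)},\ldots,x_0^{(M)}$ are i.i.d. with law $p_0$. (A2) There exist constants $R,\nu>0$ such that for every $i$, $|A_i(x_0)-\mathcal A_i|\le R$ for $p_0$-a.e. $x_0$ and $\operatorname{Var}_{x_0\sim p_0}(A_i(x_0))\le\nu^2$. (A3) $\widehat w\in\mathcal W_\omega$; the unconstrained minimizer of $\mathcal J_{\sigma,\varepsilon_a}$ over $\{w:w_i>0,\sum_iw_i=1\}$ lies in $\mathcal W_\omega$; and there is $G_{\max}>0$ with $0\le\widehat b_i\le G_{\max}$ and $0\le b_i^\star\le G_{\max}$ for all $i$. (A4) For every $w\in\mathcal W_\omega$ and every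 $x_0$, $\|T_w(x_0)-T(x_0)\|\le\frac{C_{\rm Eul}}{B}\sum_{i=0}^{N-1}\frac{A_i(x_0)\Delta_i^2}{w_i}$. For $\delta\in(0,1)$ set $$\eta_M(\delta)=\sqrt{\frac{2\nu^2\log(2N/\delta)}{M}}+\frac{2R\log(2N/\delta)}{3M},\quad \alpha_M(\delta)=\frac{\eta_M(\delta)}{2\sqrt{\varepsilon_a}},\quad \zeta_M(\delta)=2G_{\max}\alpha_M(\delta).$$ Then for every $\delta\in(0,1)$, with probability at least $1-\delta$ over the calibration set, $$W_1(\mu_{\widehat w},\mu_1)\le\frac{C_{\rm Eul}}{B}\left[\mathcal J(w^\star)+\frac{2D_2}{\omega}\bigl(\zeta_M(\delta)+\beta_{\sigma,\varepsilon_a}\bigr)\right].$$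
   Context: $W_1$ denotes the 1-Wasserstein distance $W_1(\mu,\nu)=\inf_{\pi}\int\|x-y\|\,d\pi(x,y)$ over couplings $\pi$ of $\mu$ and $\nu$. Interpretation: a schedule $w$ assigns fraction $w_i$ of a total budget of $B$ Euler steps to the interval $[\tau_i,\tau_{i+1}]$; $A_i(x_0)$ is an interval-wise local-error coefficient (e.g. the average or supremum over $[\tau_i,\tau_{i+1}]$ of the trajectory acceleration norm $\|\ddot x(t;x_0)\|$ for the ODE $\dot x=u_\theta(x,t)$, $x(0)=x_0$). *)

theory Defs
  imports "HOL-Probability.Probability"
begin

definition couplings :: "'a::euclidean_space measure \<Rightarrow> 'a measure \<Rightarrow> ('a \<times> 'a) measure set" where
  "couplings \<mu> \<nu> = {\<pi>. sets \<pi> = sets (borel \<Otimes>\<^sub>M borel) \<and> prob_space \<pi> \<and>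
      distr \<pi> borel fst = \<mu> \<and> distr \<pi> borel snd = \<nu>}"

definition wasserstein1 :: "'a::euclidean_space measure \<Rightarrow> 'a measure \<Rightarrow> ennreal" where
  "wasserstein1 \<mu> \<nu> = (INF \<pi>\<in>couplings \<mu> \<nu>. \<integral>\<^sup>+ z. ennreal (norm (fst z - snd z)) \<partial>\<pi>)"

definition schedules :: "nat \<Rightarrow> real \<Rightarrow> (nat \<Rightarrow> real) set" where
  "schedules N \<omega> = {w. (\<forall>i<N. w i \<ge> \<omega>) \<and> (\<Sum>i<N. w i) = 1}"

definition Jobj :: "nat \<Rightarrow> (nat \<Rightarrow> real) \<Rightarrow> (nat \<Rightarrow> real) \<Rightarrow> (nat \<Rightarrow> real) \<Rightarrow> real" where
  "Jobj N \<Delta> c w = (\<Sum>i<N. c i * (\<Delta> i)\<^sup>2 / w i)"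


definition gstep :: "(nat \<Rightarrow> real) \<Rightarrow> nat \<Rightarrow> real" where
  "gstep \<tau> i = \<tau> (Suc i) - \<tau> i"

definition emp_mean :: "nat \<Rightarrow> (nat \<Rightarrow> 'a \<Rightarrow> real) \<Rightarrow> (nat \<Rightarrow> 'b \<Rightarrow> 'a) \<Rightarrow> 'b \<Rightarrow> nat \<Rightarrow> real" where
  "emp_mean M A X \<xi> i = (\<Sum>m=1..M. A i (X m \<xi>)) / real M"

definition gfun :: "real \<Rightarrow> (nat \<Rightarrow> real) \<Rightarrow> nat \<Rightarrow> real" where
  "gfun \<epsilon> a i = sqrt (a i + \<epsilon>)"

definition smooth :: "nat \<Rightarrow> (nat \<Rightarrow> nat \<Rightarrow> real) \<Rightarrow> (nat \<Rightarrow> real) \<Rightarrow> nat \<Rightarrow> real" where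
  "smooth N K g i = (\<Sum>l<N. K i l * g l)"

definition sched :: "nat \<Rightarrow> (nat \<Rightarrow> real) \<Rightarrow> (nat \<Rightarrow> real) \<Rightarrow> nat \<Rightarrow> real" where
  "sched N \<Delta> b i = \<Delta> i * b i / (\<Sum>l<N. \<Delta> l * b l)"

definition etaM :: "real \<Rightarrow> real \<Rightarrow> nat \<Rightarrow> nat \<Rightarrow> real \<Rightarrow> real" where
  "etaM \<nu> R N M \<delta> = sqrt (2 * \<nu>\<^sup>2 * ln (2 * real N / \<delta>) / real M)
              + 2 * R * ln (2 * real N / \<delta>) / (3 * real M)"

end

theory Submission
  imports Defs
begin

text \<open>
  By Bernstein's inequality and a union bound, with probability at least \<open>1 - \<delta>\<close> all
  \<open>N\<close> calibration means lie within \<open>\<eta>\<^sub>M(\<delta>)\<close> of their expectations. On that event,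
  since \<open>a \<mapsto> sqrt (a + \<epsilon>\<^sub>a)\<close> is \<open>1 / (2 sqrt \<epsilon>\<^sub>a)\<close>-Lipschitz on \<open>[0, \<infinity>)\<close> and a stochastic
  kernel does not increase sup-distances, the calibrated weights \<open>b\<^sub>i\<^sup>2\<close> differ from the
  \<open>A\<^sub>i\<close> by at most \<open>\<zeta>\<^sub>M(\<delta>) + \<beta>\<close>. By Cauchy-Schwarz the calibrated schedule minimises the
  objective with weights \<open>b\<^sub>i\<^sup>2\<close> over the simplex, so passing from \<open>A\<close> to \<open>b\<^sup>2\<close> and back
  costs at most \<open>2 D\<^sub>2 (\<zeta>\<^sub>M(\<delta>) + \<beta>) / \<omega>\<close> against \<open>w\<^sup>*\<close>. Finally, coupling both pushforwards
  through the common initial point bounds \<open>W\<^sub>1\<close> by the expected Euler error.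
\<close>

section \<open>Bernstein's inequality\<close>

lemma two_mult_three_power_le_fact: "2 * 3 ^ n \<le> (fact (n + 2) :: real)"
proof (induction n)
  case 0
  then show ?case by simp
next
  case (Suc n)
  have "2 * 3 ^ Suc n = 3 * (2 * 3 ^ n :: real)" by simp
  also have "\<dots> \<le> 3 * fact (n + 2)" using Suc.IH by (intro mult_left_mono) auto
  also have "\<dots> \<le> real (n + 3) * fact (n + 2)" by (intro mult_right_mono) auto
  also have "\<dots> = fact (Suc n + 2)" by (simp add: algebra_simps)
  finally show ?case .
qed

lemma exp_le_quadratic_of_nonpos:
  fixes x :: real
  assumes "x \<le> 0"
  shows "exp x \<le> 1 + x + x\<^sup>2 / 2"
proof -
  define g where "g = (\<lambda>y::real. 1 + y + y\<^sup>2 / 2 - exp y)"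
  have "g 0 \<le> g x"
  proof (rule DERIV_nonpos_imp_nonincreasing[OF assms])
    fix y :: real
    show "\<exists>d. (g has_real_derivative d) (at y) \<and> d \<le> 0"
    proof (intro exI conjI)
      show "(g has_real_derivative 1 + y - exp y) (at y)"
        unfolding g_def by (auto intro!: derivative_eq_intros)
      show "1 + y - exp y \<le> 0"
        using exp_ge_add_one_self[of y] by linarith
    qed
  qed
  then show ?thesis by (simp add: g_def)
qed

lemma exp_le_Bernstein_of_nonneg:
  fixes x :: real
  assumes "0 \<le> x" "x < 3"
  shows "exp x \<le> 1 + x + x\<^sup>2 / (2 * (1 - x / 3))"
proof -
  have "(\<lambda>n. x ^ n / fact n) sums exp x"
    using exp_converges[of x] by (simp add: divide_inverse mult.commute)
  then have tail: "(\<lambda>n. x ^ (n + 2) / fact (n + 2)) sums (exp x - (1 + x))"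
    using sums_iff_shift[of "\<lambda>n. x ^ n / fact n" 2] by (simp add: eval_nat_numeral)
  have geom: "(\<lambda>n. x\<^sup>2 / 2 * (x / 3) ^ n) sums (x\<^sup>2 / 2 * (1 / (1 - x / 3)))"
    by (intro sums_mult geometric_sums) (use assms in auto)
  have "exp x - (1 + x) \<le> x\<^sup>2 / 2 * (1 / (1 - x / 3))"
  proof (rule sums_le[OF _ tail geom])
    fix n
    have "x ^ (n + 2) / fact (n + 2) \<le> x ^ (n + 2) / (2 * 3 ^ n)"
      using two_mult_three_power_le_fact[of n] assms by (intro divide_left_mono) auto
    also have "\<dots> = x\<^sup>2 / 2 * (x / 3) ^ n"
      by (simp add: power_add power_divide field_simps power2_eq_square)
    finally show "x ^ (n + 2) / fact (n + 2) \<le> x\<^sup>2 / 2 * (x / 3) ^ n" .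
  qed
  then show ?thesis by simp
qed

lemma exp_le_Bernstein:
  fixes x u :: real
  assumes "x \<le> u" "0 \<le> u" "u < 3"
  shows "exp x \<le> 1 + x + x\<^sup>2 / (2 * (1 - u / 3))"
proof (cases "x \<le> 0")
  case True
  have "x\<^sup>2 / 2 \<le> x\<^sup>2 / (2 * (1 - u / 3))"
    using assms by (intro divide_left_mono) auto
  with exp_le_quadratic_of_nonpos[OF True] show ?thesis by linarith
next
  case False
  have "x\<^sup>2 / (2 * (1 - x / 3)) \<le> x\<^sup>2 / (2 * (1 - u / 3))"
    using assms False by (intro divide_left_mono) auto
  with exp_le_Bernstein_of_nonneg[of x] False assms show ?thesis by linarith
qed

lemma (in prob_space) Bernstein_mgf_le:
  assumes [measurable]: "Y \<in> borel_measurable M"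
    and bound: "AE x in M. \<bar>Y x\<bar> \<le> R" and mean: "expectation Y = 0"
    and var: "expectation (\<lambda>x. (Y x)\<^sup>2) \<le> v"
    and R: "R \<ge> 0" and l: "0 < l" "l * R < 3"
  shows "(\<integral>\<^sup>+x. ennreal (exp (l * Y x)) \<partial>M) \<le> ennreal (exp (l\<^sup>2 * v / (2 * (1 - l * R / 3))))"
proof -
  define c where "c = 1 / (2 * (1 - l * R / 3))"
  have c: "c > 0" using l by (simp add: c_def mult.commute)
  have pointwise: "AE x in M. exp (l * Y x) \<le> 1 + l * Y x + c * l\<^sup>2 * (Y x)\<^sup>2"
    using bound
  proof eventually_elim
    case (elim x)
    have "l * Y x \<le> l * R" using elim l by (intro mult_left_mono) auto
    from exp_le_Bernstein[OF this _ l(2)] l R show ?case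
      by (simp add: c_def power_mult_distrib)
  qed
  have intY: "integrable M Y"
    by (rule integrable_const_bound[where B = R]) (use bound in auto)
  have intY2: "integrable M (\<lambda>x. (Y x)\<^sup>2)"
  proof (rule integrable_const_bound[where B = "R\<^sup>2"])
    show "AE x in M. norm ((Y x)\<^sup>2) \<le> R\<^sup>2"
      using bound by eventually_elim (use R in \<open>simp add: abs_le_square_iff power2_le_iff_abs_le\<close>)
  qed simp
  have "(\<integral>\<^sup>+x. ennreal (exp (l * Y x)) \<partial>M) \<le> (\<integral>\<^sup>+x. ennreal (1 + l * Y x + c * l\<^sup>2 * (Y x)\<^sup>2) \<partial>M)"
    using pointwise by (intro nn_integral_mono_AE) (auto elim: eventually_mono intro: ennreal_leI)
  also have "\<dots> = ennreal (expectation (\<lambda>x. 1 + l * Y x + c * l\<^sup>2 * (Y x)\<^sup>2))"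
    using pointwise intY intY2
    by (intro nn_integral_eq_integral) (auto elim!: eventually_mono intro: order_trans[OF less_imp_le[OF exp_gt_zero]])
  also have "expectation (\<lambda>x. 1 + l * Y x + c * l\<^sup>2 * (Y x)\<^sup>2) = 1 + c * l\<^sup>2 * expectation (\<lambda>x. (Y x)\<^sup>2)"
    using intY intY2 mean by (simp add: prob_space)
  also have "\<dots> \<le> 1 + c * l\<^sup>2 * v"
    using var c by (intro add_left_mono mult_left_mono) auto
  also have "\<dots> \<le> exp (c * l\<^sup>2 * v)" by (rule exp_ge_add_one_self)
  finally show ?thesis by (simp add: c_def mult_ac ennreal_leI)
qed

lemma (in prob_space) Bernstein_ineq_ge:
  fixes Y :: "'i \<Rightarrow> 'a \<Rightarrow> real"
  assumes fin: "finite I" and ne: "I \<noteq> {}" and indep: "indep_vars (\<lambda>_. borel) Y I"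
    and bound: "\<And>i. i \<in> I \<Longrightarrow> AE x in M. \<bar>Y i x\<bar> \<le> R"
    and mean: "\<And>i. i \<in> I \<Longrightarrow> expectation (Y i) = 0"
    and var: "\<And>i. i \<in> I \<Longrightarrow> expectation (\<lambda>x. (Y i x)\<^sup>2) \<le> v"
    and R: "R \<ge> 0" and v: "v > 0" and t: "t > 0"
  shows "prob {x\<in>space M. (\<Sum>i\<in>I. Y i x) \<ge> t} \<le> exp (- t\<^sup>2 / (2 * (real (card I) * v + R * t / 3)))"
proof -
  define n where "n = real (card I)"
  have n: "n > 0" using fin ne by (simp add: n_def card_gt_0_iff)
  define D where "D = n * v + R * t / 3"
  have D: "D > 0" using n v R t unfolding D_def by (simp add: add_pos_nonneg)
  define l where "l = t / D"
  have l: "l > 0" using t D by (simp add: l_def)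
  have lR: "1 - l * R / 3 = n * v / D"
    using D unfolding l_def D_def by (simp add: field_simps)
  moreover have "n * v / D > 0" using n v D by simp
  ultimately have "l * R < 3" by linarith
  have [measurable]: "\<And>i. i \<in> I \<Longrightarrow> Y i \<in> borel_measurable M"
    using indep unfolding indep_vars_def by blast
  define q where "q = l\<^sup>2 * v / (2 * (1 - l * R / 3))"
  have "ennreal (prob {x\<in>space M. (\<Sum>i\<in>I. Y i x) \<ge> t}) = emeasure M {x\<in>space M. (\<Sum>i\<in>I. Y i x) \<ge> t}"
    by (simp add: emeasure_eq_measure)
  also have "\<dots> \<le> ennreal (exp (-l*t)) * (\<integral>\<^sup>+x\<in>space M. exp (l * (\<Sum>i\<in>I. Y i x)) \<partial>M)"
    by (intro Chernoff_ineq_nn_integral_ge l) auto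
  also have "(\<integral>\<^sup>+x\<in>space M. exp (l * (\<Sum>i\<in>I. Y i x)) \<partial>M) =
             (\<integral>\<^sup>+x. (\<Prod>i\<in>I. ennreal (exp (l * Y i x))) \<partial>M)"
    by (intro nn_integral_cong) (simp_all add: sum_distrib_left exp_sum fin prod_ennreal)
  also have "\<dots> = (\<Prod>i\<in>I. \<integral>\<^sup>+x. ennreal (exp (l * Y i x)) \<partial>M)"
    by (intro indep_vars_nn_integral fin indep_vars_compose2[OF indep]) auto
  also have "ennreal (exp (-l * t)) * \<dots> \<le> ennreal (exp (-l * t)) * (\<Prod>i\<in>I. ennreal (exp q))"
    unfolding q_def
    by (intro mult_left_mono prod_mono_ennreal Bernstein_mgf_le bound mean var R l \<open>l * R < 3\<close>) auto
  also have "\<dots> = ennreal (exp (-l * t) * exp q ^ card I)"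
    by (simp add: ennreal_mult ennreal_power)
  also have "exp (-l * t) * exp q ^ card I = exp (-l * t + n * q)"
    unfolding n_def exp_add exp_of_nat_mult by simp
  also have "-l * t + n * q = - t\<^sup>2 / (2 * D)"
    using n v D unfolding q_def lR by (simp add: l_def field_simps power2_eq_square)
  finally show ?thesis
    by (subst (asm) ennreal_le_iff) (simp_all add: D_def n_def)
qed

corollary (in prob_space) Bernstein_ineq_abs_ge:
  fixes Y :: "'i \<Rightarrow> 'a \<Rightarrow> real"
  assumes fin: "finite I" and ne: "I \<noteq> {}" and indep: "indep_vars (\<lambda>_. borel) Y I"
    and bound: "\<And>i. i \<in> I \<Longrightarrow> AE x in M. \<bar>Y i x\<bar> \<le> R"
    and mean: "\<And>i. i \<in> I \<Longrightarrow> expectation (Y i) = 0"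
    and var: "\<And>i. i \<in> I \<Longrightarrow> expectation (\<lambda>x. (Y i x)\<^sup>2) \<le> v"
    and R: "R \<ge> 0" and v: "v > 0" and t: "t > 0"
  shows "prob {x\<in>space M. \<bar>\<Sum>i\<in>I. Y i x\<bar> \<ge> t} \<le> 2 * exp (- t\<^sup>2 / (2 * (real (card I) * v + R * t / 3)))"
proof -
  have [measurable]: "\<And>i. i \<in> I \<Longrightarrow> Y i \<in> borel_measurable M"
    using indep unfolding indep_vars_def by blast
  have indep': "indep_vars (\<lambda>_. borel) (\<lambda>i x. - Y i x) I"
    by (rule indep_vars_compose2[OF indep]) auto
  have "{x\<in>space M. \<bar>\<Sum>i\<in>I. Y i x\<bar> \<ge> t} =
        {x\<in>space M. (\<Sum>i\<in>I. Y i x) \<ge> t} \<union> {x\<in>space M. (\<Sum>i\<in>I. - Y i x) \<ge> t}"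
    by (auto simp: sum_negf)
  then have "prob {x\<in>space M. \<bar>\<Sum>i\<in>I. Y i x\<bar> \<ge> t} \<le>
      prob {x\<in>space M. (\<Sum>i\<in>I. Y i x) \<ge> t} + prob {x\<in>space M. (\<Sum>i\<in>I. - Y i x) \<ge> t}"
    using fin by (simp add: measure_Un_le)
  also have "\<dots> \<le> 2 * exp (- t\<^sup>2 / (2 * (real (card I) * v + R * t / 3)))"
    using Bernstein_ineq_ge[OF fin ne indep bound mean var R v t]
      Bernstein_ineq_ge[OF fin ne indep', of R v t] bound mean var R v t
    by simp
  finally show ?thesis .
qed

lemma (in prob_space) sample_mean_deviation_ge:
  fixes X :: "nat \<Rightarrow> 'a \<Rightarrow> 'b::topological_space" and f :: "'b \<Rightarrow> real" and n :: nat
  assumes n: "n \<ge> 1"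
    and distr: "\<And>m. m \<in> {1..n} \<Longrightarrow> distr M borel (X m) = P"
    and indep: "indep_vars (\<lambda>_. borel) X {1..n}"
    and f [measurable]: "f \<in> borel_measurable borel"
    and bound: "AE x in P. \<bar>f x - (\<integral>x. f x \<partial>P)\<bar> \<le> R"
    and var: "(\<integral>x. (f x - (\<integral>x. f x \<partial>P))\<^sup>2 \<partial>P) \<le> v"
    and R: "R \<ge> 0" and v: "v > 0" and \<eta>: "\<eta> > 0"
  shows "prob {\<xi>\<in>space M. \<bar>(\<Sum>m=1..n. f (X m \<xi>)) / real n - (\<integral>x. f x \<partial>P)\<bar> \<ge> \<eta>}
    \<le> 2 * exp (- real n * \<eta>\<^sup>2 / (2 * (v + R * \<eta> / 3)))"
proof -
  define \<mu> where "\<mu> = (\<integral>x. f x \<partial>P)"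
  define Y where "Y = (\<lambda>m \<xi>. f (X m \<xi>) - \<mu>)"
  have X [measurable]: "\<And>m. m \<in> {1..n} \<Longrightarrow> X m \<in> borel_measurable M"
    using indep unfolding indep_vars_def by blast
  have "1 \<in> {1..n}" using n by simp
  then have P: "prob_space P" "sets P = sets borel"
    using distr[of 1] prob_space_distr[OF X[of 1]] by auto
  interpret P: prob_space P by (rule P(1))
  have int_f: "integrable P f"
  proof (rule P.integrable_const_bound[where B = "\<bar>\<mu>\<bar> + R"])
    show "AE x in P. norm (f x) \<le> \<bar>\<mu>\<bar> + R"
      using bound by eventually_elim (auto simp: \<mu>_def)
  qed (simp add: measurable_cong_sets[OF P(2) refl])
  have expectation_Y: "expectation (\<lambda>\<xi>. g (Y m \<xi>)) = (\<integral>x. g (f x - \<mu>) \<partial>P)"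
    if "m \<in> {1..n}" and [measurable]: "g \<in> borel_measurable borel" for m and g :: "real \<Rightarrow> real"
    unfolding Y_def using integral_distr[OF X[OF that(1)], of "\<lambda>x. g (f x - \<mu>)"] distr[OF that(1)]
    by simp
  have "prob {\<xi>\<in>space M. \<bar>\<Sum>m\<in>{1..n}. Y m \<xi>\<bar> \<ge> real n * \<eta>}
      \<le> 2 * exp (- (real n * \<eta>)\<^sup>2 / (2 * (real (card {1..n}) * v + R * (real n * \<eta>) / 3)))"
  proof (rule Bernstein_ineq_abs_ge[OF _ _ _ _ _ _ R v])
    show "indep_vars (\<lambda>_. borel) Y {1..n}"
      unfolding Y_def by (rule indep_vars_compose2[OF indep, of "\<lambda>_ x. f x - \<mu>"]) auto
    show "AE \<xi> in M. \<bar>Y m \<xi>\<bar> \<le> R" if "m \<in> {1..n}" for m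
      using AE_distrD[OF X[OF that]] bound distr[OF that] by (auto simp: Y_def \<mu>_def)
    show "expectation (Y m) = 0" if "m \<in> {1..n}" for m
      using expectation_Y[OF that, of "\<lambda>y. y"] int_f P by (simp add: \<mu>_def prob_space.prob_space)
    show "expectation (\<lambda>\<xi>. (Y m \<xi>)\<^sup>2) \<le> v" if "m \<in> {1..n}" for m
      using expectation_Y[OF that, of "\<lambda>y. y\<^sup>2"] var by (simp add: \<mu>_def)
  qed (use n \<eta> in auto)
  moreover have "{\<xi>\<in>space M. \<bar>(\<Sum>m=1..n. f (X m \<xi>)) / real n - \<mu>\<bar> \<ge> \<eta>} =
      {\<xi>\<in>space M. \<bar>\<Sum>m\<in>{1..n}. Y m \<xi>\<bar> \<ge> real n * \<eta>}"
    using n by (auto simp: Y_def sum_subtractf field_simps)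
  moreover have "(real n * \<eta>)\<^sup>2 / (2 * (real n * v + R * (real n * \<eta>) / 3)) =
      real n * (real n * \<eta>\<^sup>2) / (real n * (2 * (v + R * \<eta> / 3)))"
    by (simp add: algebra_simps power2_eq_square)
  ultimately show ?thesis
    using n by (simp add: \<mu>_def)
qed

section \<open>Concentration of the calibration means\<close>

lemma etaM_Bernstein_exponent:
  fixes n N :: nat and \<nu> R \<delta> :: real
  defines "\<eta> \<equiv> etaM \<nu> R N n \<delta>"
  assumes n: "n \<ge> 1" and R: "R > 0" and \<nu>: "\<nu> > 0" and \<delta>: "0 < \<delta>" "\<delta> < 2 * real N"
  shows "\<eta> > 0" and "exp (- real n * \<eta>\<^sup>2 / (2 * (\<nu>\<^sup>2 + R * \<eta> / 3))) \<le> \<delta> / (2 * real N)"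
proof -
  define L where "L = ln (2 * real N / \<delta>)"
  have L: "L > 0" using \<delta> by (simp add: L_def)
  define a where "a = sqrt (2 * \<nu>\<^sup>2 * L / real n)"
  define b where "b = 2 * R * L / (3 * real n)"
  have \<eta>_eq: "\<eta> = a + b" by (simp add: \<eta>_def etaM_def a_def b_def L_def)
  have a: "a > 0" and b: "b > 0" using R \<nu> L n by (simp_all add: a_def b_def)
  then show \<eta>: "\<eta> > 0" using \<eta>_eq by simp
  have "L * (2 * (\<nu>\<^sup>2 + R * \<eta> / 3)) = real n * a\<^sup>2 + real n * b * \<eta>"
    using L n by (simp add: a_def b_def algebra_simps)
  also have "\<dots> \<le> real n * a\<^sup>2 + real n * b * \<eta> + real n * (a * b)"
    using a b by simp
  also have "\<dots> = real n * \<eta>\<^sup>2"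
    by (simp add: \<eta>_eq power2_eq_square algebra_simps)
  finally have "L * (2 * (\<nu>\<^sup>2 + R * \<eta> / 3)) \<le> real n * \<eta>\<^sup>2" .
  moreover have "2 * (\<nu>\<^sup>2 + R * \<eta> / 3) > 0" using \<nu> R \<eta> by (simp add: add_pos_pos)
  ultimately have "L \<le> real n * \<eta>\<^sup>2 / (2 * (\<nu>\<^sup>2 + R * \<eta> / 3))"
    by (simp add: pos_le_divide_eq)
  then have "exp (- real n * \<eta>\<^sup>2 / (2 * (\<nu>\<^sup>2 + R * \<eta> / 3))) \<le> exp (- L)" by simp
  also have "exp (- L) = \<delta> / (2 * real N)"
    using \<delta> by (simp add: L_def exp_minus)
  finally show "exp (- real n * \<eta>\<^sup>2 / (2 * (\<nu>\<^sup>2 + R * \<eta> / 3))) \<le> \<delta> / (2 * real N)" .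
qed

lemma emp_mean_nonneg:
  assumes "\<And>x. A i x \<ge> 0"
  shows "emp_mean n A X \<xi> i \<ge> 0"
  using assms by (simp add: emp_mean_def sum_nonneg)

lemma (in prob_space) emp_mean_uniform_deviation:
  fixes X :: "nat \<Rightarrow> 'a \<Rightarrow> 'b::topological_space" and A :: "nat \<Rightarrow> 'b \<Rightarrow> real" and n N :: nat
  assumes n: "n \<ge> 1"
    and distr: "\<And>m. m \<in> {1..n} \<Longrightarrow> distr M borel (X m) = P"
    and indep: "indep_vars (\<lambda>_. borel) X {1..n}"
    and A: "\<And>i. i < N \<Longrightarrow> A i \<in> borel_measurable borel"
    and bound: "\<And>i. i < N \<Longrightarrow> AE x in P. \<bar>A i x - (\<integral>x. A i x \<partial>P)\<bar> \<le> R"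
    and var: "\<And>i. i < N \<Longrightarrow> (\<integral>x. (A i x - (\<integral>x. A i x \<partial>P))\<^sup>2 \<partial>P) \<le> \<nu>\<^sup>2"
    and R: "R > 0" and \<nu>: "\<nu> > 0" and \<delta>: "0 < \<delta>" "\<delta> < 2 * real N"
  shows "\<exists>E\<in>events. prob E \<ge> 1 - \<delta> \<and>
    (\<forall>\<xi>\<in>E. \<forall>i<N. \<bar>emp_mean n A X \<xi> i - (\<integral>x. A i x \<partial>P)\<bar> \<le> etaM \<nu> R N n \<delta>)"
proof -
  define \<eta> where "\<eta> = etaM \<nu> R N n \<delta>"
  note \<eta>_bounds = etaM_Bernstein_exponent[OF n R \<nu> \<delta>, folded \<eta>_def]
  define bad where "bad i = {\<xi>\<in>space M. \<bar>emp_mean n A X \<xi> i - (\<integral>x. A i x \<partial>P)\<bar> \<ge> \<eta>}" for i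
  have [measurable]: "\<And>m. m \<in> {1..n} \<Longrightarrow> X m \<in> borel_measurable M"
    using indep unfolding indep_vars_def by blast
  have bad_event: "bad i \<in> events" if "i < N" for i
  proof -
    have [measurable]: "A i \<in> borel_measurable borel" using A[OF that] .
    have "(\<lambda>\<xi>. \<Sum>m\<in>{1..n}. A i (X m \<xi>)) \<in> borel_measurable M" by measurable
    then show ?thesis unfolding bad_def emp_mean_def by measurable
  qed
  have bad_prob: "prob (bad i) \<le> \<delta> / real N" if "i < N" for i
  proof -
    have "prob (bad i) \<le> 2 * exp (- real n * \<eta>\<^sup>2 / (2 * (\<nu>\<^sup>2 + R * \<eta> / 3)))"
      unfolding bad_def emp_mean_def
      using sample_mean_deviation_ge[OF n distr indep A[OF that] bound[OF that] var[OF that]] R \<nu> \<eta>_bounds(1)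
      by simp
    also have "\<dots> \<le> \<delta> / real N" using \<eta>_bounds(2) by simp
    finally show ?thesis .
  qed
  define E where "E = space M - (\<Union>i<N. bad i)"
  have "prob (\<Union>i<N. bad i) \<le> (\<Sum>i<N. prob (bad i))"
    using bad_event by (intro finite_measure_subadditive_finite) auto
  also have "\<dots> \<le> (\<Sum>i<N. \<delta> / real N)" using bad_prob by (intro sum_mono) auto
  also have "\<dots> = \<delta>" using \<delta> by simp
  finally have "prob E \<ge> 1 - \<delta>"
    unfolding E_def using bad_event by (subst prob_compl) auto
  moreover have "E \<in> events" unfolding E_def using bad_event by auto
  moreover have "\<bar>emp_mean n A X \<xi> i - (\<integral>x. A i x \<partial>P)\<bar> \<le> \<eta>" if "\<xi> \<in> E" "i < N" for \<xi> i
  proof -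
    have "\<xi> \<in> space M" "\<xi> \<notin> bad i" using that by (auto simp: E_def)
    then show ?thesis by (simp add: bad_def)
  qed
  ultimately show ?thesis unfolding \<eta>_def by blast
qed

section \<open>Smoothed square-root weights\<close>

lemma abs_sqrt_add_diff_le:
  fixes a b e :: real
  assumes "a \<ge> 0" "b \<ge> 0" "e > 0"
  shows "\<bar>sqrt (a + e) - sqrt (b + e)\<bar> \<le> \<bar>a - b\<bar> / (2 * sqrt e)"
proof -
  have pa: "sqrt e \<le> sqrt (a + e)" and pb: "sqrt e \<le> sqrt (b + e)"
    using assms by auto
  have se: "sqrt e > 0" using assms by simp
  then have s: "sqrt (a + e) + sqrt (b + e) > 0" using pa pb by linarith
  have "(sqrt (a + e) - sqrt (b + e)) * (sqrt (a + e) + sqrt (b + e)) = a - b"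
    using assms by (simp add: algebra_simps)
  then have "\<bar>a - b\<bar> = \<bar>sqrt (a + e) - sqrt (b + e)\<bar> * (sqrt (a + e) + sqrt (b + e))"
    using s by (metis abs_mult abs_of_pos)
  then have "\<bar>sqrt (a + e) - sqrt (b + e)\<bar> = \<bar>a - b\<bar> / (sqrt (a + e) + sqrt (b + e))"
    using s by (simp add: eq_divide_eq)
  also have "\<dots> \<le> \<bar>a - b\<bar> / (2 * sqrt e)"
  proof (rule divide_left_mono)
    show "2 * sqrt e \<le> sqrt (a + e) + sqrt (b + e)" using pa pb by linarith
  qed (use s se in auto)
  finally show ?thesis .
qed

lemma abs_smooth_diff_le:
  assumes K_nonneg: "\<And>l. l < N \<Longrightarrow> K i l \<ge> 0" and K_sum: "(\<Sum>l<N. K i l) = 1"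
    and close: "\<And>l. l < N \<Longrightarrow> \<bar>g l - h l\<bar> \<le> a"
  shows "\<bar>smooth N K g i - smooth N K h i\<bar> \<le> a"
proof -
  have "\<bar>smooth N K g i - smooth N K h i\<bar> = \<bar>\<Sum>l<N. K i l * (g l - h l)\<bar>"
    by (simp add: smooth_def sum_subtractf right_diff_distrib)
  also have "\<dots> \<le> (\<Sum>l<N. K i l * a)"
    using K_nonneg close by (intro order_trans[OF sum_abs] sum_mono) (simp add: abs_mult mult_left_mono)
  also have "\<dots> = a" using K_sum by (simp flip: sum_distrib_right)
  finally show ?thesis .
qed

lemma abs_sq_smooth_gfun_diff_le:
  assumes Ah: "\<And>l. l < N \<Longrightarrow> Ah l \<ge> 0" and Ac: "\<And>l. l < N \<Longrightarrow> Ac l \<ge> 0"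
    and close: "\<And>l. l < N \<Longrightarrow> \<bar>Ah l - Ac l\<bar> \<le> \<eta>" and \<epsilon>: "\<epsilon> > 0"
    and K_nonneg: "\<And>l. l < N \<Longrightarrow> K i l \<ge> 0" and K_sum: "(\<Sum>l<N. K i l) = 1"
    and bh: "0 \<le> smooth N K (gfun \<epsilon> Ah) i" "smooth N K (gfun \<epsilon> Ah) i \<le> G"
    and bc: "0 \<le> smooth N K (gfun \<epsilon> Ac) i" "smooth N K (gfun \<epsilon> Ac) i \<le> G"
  shows "\<bar>(smooth N K (gfun \<epsilon> Ah) i)\<^sup>2 - (smooth N K (gfun \<epsilon> Ac) i)\<^sup>2\<bar> \<le> 2 * G * (\<eta> / (2 * sqrt \<epsilon>))"
proof -
  define x where "x = smooth N K (gfun \<epsilon> Ah) i"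
  define y where "y = smooth N K (gfun \<epsilon> Ac) i"
  have xy: "\<bar>x - y\<bar> \<le> \<eta> / (2 * sqrt \<epsilon>)"
    unfolding x_def y_def
  proof (rule abs_smooth_diff_le[where K = K and i = i, OF K_nonneg K_sum])
    fix l assume l: "l < N"
    have "\<bar>gfun \<epsilon> Ah l - gfun \<epsilon> Ac l\<bar> \<le> \<bar>Ah l - Ac l\<bar> / (2 * sqrt \<epsilon>)"
      unfolding gfun_def using Ah[OF l] Ac[OF l] \<epsilon> by (rule abs_sqrt_add_diff_le)
    also have "\<dots> \<le> \<eta> / (2 * sqrt \<epsilon>)"
      using close[OF l] \<epsilon> by (intro divide_right_mono) auto
    finally show "\<bar>gfun \<epsilon> Ah l - gfun \<epsilon> Ac l\<bar> \<le> \<eta> / (2 * sqrt \<epsilon>)" .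
  qed
  have "\<bar>x\<^sup>2 - y\<^sup>2\<bar> = \<bar>x - y\<bar> * (x + y)"
  proof -
    have "x\<^sup>2 - y\<^sup>2 = (x - y) * (x + y)" by (simp add: power2_eq_square algebra_simps)
    then show ?thesis using bh bc by (simp add: abs_mult x_def y_def)
  qed
  also have "\<dots> \<le> \<eta> / (2 * sqrt \<epsilon>) * (2 * G)"
    using xy bh bc by (intro mult_mono) (auto simp: x_def y_def)
  finally show ?thesis by (simp add: x_def y_def mult_ac)
qed

lemma abs_sq_smooth_gfun_le_Max:
  assumes Ah: "\<And>l. l < N \<Longrightarrow> Ah l \<ge> 0" and Ac: "\<And>l. l < N \<Longrightarrow> Ac l \<ge> 0"
    and close: "\<And>l. l < N \<Longrightarrow> \<bar>Ah l - Ac l\<bar> \<le> \<eta>" and \<epsilon>: "\<epsilon> > 0"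
    and K_nonneg: "\<And>l. l < N \<Longrightarrow> K i l \<ge> 0" and K_sum: "(\<Sum>l<N. K i l) = 1"
    and bh: "0 \<le> smooth N K (gfun \<epsilon> Ah) i" "smooth N K (gfun \<epsilon> Ah) i \<le> G"
    and bc: "0 \<le> smooth N K (gfun \<epsilon> Ac) i" "smooth N K (gfun \<epsilon> Ac) i \<le> G"
    and i: "i < N"
  shows "\<bar>(smooth N K (gfun \<epsilon> Ah) i)\<^sup>2 - Ac i\<bar> \<le> 2 * G * (\<eta> / (2 * sqrt \<epsilon>))
    + Max ((\<lambda>j. \<bar>(smooth N K (gfun \<epsilon> Ac) j)\<^sup>2 - Ac j\<bar>) ` {..<N})"
proof -
  have "\<bar>(smooth N K (gfun \<epsilon> Ac) i)\<^sup>2 - Ac i\<bar> \<le> Max ((\<lambda>j. \<bar>(smooth N K (gfun \<epsilon> Ac) j)\<^sup>2 - Ac j\<bar>) ` {..<N})"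
    using i by (intro Max_ge) auto
  with abs_sq_smooth_gfun_diff_le[where K = K and i = i, OF Ah Ac close \<epsilon> K_nonneg K_sum bh bc]
  show ?thesis by linarith
qed

section \<open>Optimality of the calibrated schedule\<close>

lemma Jobj_sched_eq:
  "Jobj N \<Delta> (\<lambda>i. (b i)\<^sup>2) (sched N \<Delta> b) = (\<Sum>i<N. \<Delta> i * b i)\<^sup>2"
proof -
  define S where "S = (\<Sum>i<N. \<Delta> i * b i)"
  \<comment> \<open>no hypotheses needed: if \<open>\<Delta> i * b i = 0\<close> or \<open>S = 0\<close>, both sides vanish as \<open>x / 0 = 0\<close>\<close>
  have "(b i)\<^sup>2 * (\<Delta> i)\<^sup>2 / sched N \<Delta> b i = \<Delta> i * b i * S" for i
    by (cases "\<Delta> i * b i = 0"; cases "S = 0") (auto simp: sched_def S_def[symmetric] power2_eq_square)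
  then show ?thesis
    by (simp add: Jobj_def S_def[symmetric] power2_eq_square flip: sum_distrib_right)
qed

lemma sq_sum_le_Jobj:
  assumes w_pos: "\<And>i. i < N \<Longrightarrow> w i > 0" and w_sum: "(\<Sum>i<N. w i) = 1"
  shows "(\<Sum>i<N. \<Delta> i * b i)\<^sup>2 \<le> Jobj N \<Delta> (\<lambda>i. (b i)\<^sup>2) w"
proof -
  define S where "S = (\<Sum>i<N. \<Delta> i * b i)"
  have "2 * S\<^sup>2 = (\<Sum>i<N. 2 * (\<Delta> i * b i) * S)"
    by (simp add: S_def power2_eq_square sum_distrib_left sum_distrib_right mult_ac)
  also have "\<dots> \<le> (\<Sum>i<N. (b i)\<^sup>2 * (\<Delta> i)\<^sup>2 / w i + S\<^sup>2 * w i)"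
  proof (rule sum_mono)
    fix i assume "i \<in> {..<N}"
    then have w: "w i > 0" using w_pos by simp
    have "0 \<le> (\<Delta> i * b i - S * w i)\<^sup>2 / w i" using w by simp
    also have "\<dots> = (b i)\<^sup>2 * (\<Delta> i)\<^sup>2 / w i + S\<^sup>2 * w i - 2 * (\<Delta> i * b i) * S"
      using w by (simp add: field_simps power2_eq_square)
    finally show "2 * (\<Delta> i * b i) * S \<le> (b i)\<^sup>2 * (\<Delta> i)\<^sup>2 / w i + S\<^sup>2 * w i" by simp
  qed
  also have "\<dots> = Jobj N \<Delta> (\<lambda>i. (b i)\<^sup>2) w + S\<^sup>2"
    by (simp add: Jobj_def sum.distrib w_sum flip: sum_distrib_left)
  finally show ?thesis by (simp add: S_def)
qed

lemma Jobj_le_Jobj_add: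
  assumes w: "w \<in> schedules N \<omega>" and \<omega>: "\<omega> > 0"
    and close: "\<And>i. i < N \<Longrightarrow> \<bar>c i - c' i\<bar> \<le> e"
  shows "Jobj N \<Delta> c w \<le> Jobj N \<Delta> c' w + e * (\<Sum>i<N. (\<Delta> i)\<^sup>2) / \<omega>"
proof -
  have w_ge: "\<And>i. i < N \<Longrightarrow> \<omega> \<le> w i" and "(\<Sum>i<N. w i) = 1"
    using w by (auto simp: schedules_def)
  then have "N > 0" by (cases N) auto
  then have e: "e \<ge> 0" using close[of 0] by linarith
  have "Jobj N \<Delta> c w \<le> (\<Sum>i<N. (c' i + e) * (\<Delta> i)\<^sup>2 / w i)"
    unfolding Jobj_def
  proof (rule sum_mono)
    fix i assume "i \<in> {..<N}"
    then have i: "i < N" by simp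
    have "0 < w i" using w_ge[OF i] \<omega> by linarith
    moreover have "c i \<le> c' i + e" using close[OF i] by (auto simp: abs_le_iff)
    ultimately show "c i * (\<Delta> i)\<^sup>2 / w i \<le> (c' i + e) * (\<Delta> i)\<^sup>2 / w i"
      by (intro divide_right_mono mult_right_mono) auto
  qed
  also have "\<dots> = Jobj N \<Delta> c' w + e * (\<Sum>i<N. (\<Delta> i)\<^sup>2 / w i)"
    by (simp add: Jobj_def sum_distrib_left sum.distrib distrib_right add_divide_distrib)
  also have "\<dots> \<le> Jobj N \<Delta> c' w + e * ((\<Sum>i<N. (\<Delta> i)\<^sup>2) / \<omega>)"
  proof -
    have "(\<Sum>i<N. (\<Delta> i)\<^sup>2 / w i) \<le> (\<Sum>i<N. (\<Delta> i)\<^sup>2 / \<omega>)"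
      using w_ge \<omega> by (intro sum_mono divide_left_mono) (auto intro!: mult_pos_pos intro: less_le_trans[OF \<omega>])
    then show ?thesis using e by (simp add: sum_divide_distrib mult_left_mono)
  qed
  finally show ?thesis by simp
qed

lemma Jobj_sched_le:
  assumes wh: "sched N \<Delta> b \<in> schedules N \<omega>" and w: "w \<in> schedules N \<omega>" and \<omega>: "\<omega> > 0"
    and close: "\<And>i. i < N \<Longrightarrow> \<bar>(b i)\<^sup>2 - c i\<bar> \<le> e"
  shows "Jobj N \<Delta> c (sched N \<Delta> b) \<le> Jobj N \<Delta> c w + 2 * (\<Sum>i<N. (\<Delta> i)\<^sup>2) / \<omega> * e"
proof -
  have w_pos: "\<And>i. i < N \<Longrightarrow> w i > 0" and "(\<Sum>i<N. w i) = 1"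
    using w \<omega> by (auto simp: schedules_def intro: less_le_trans)
  have "Jobj N \<Delta> c (sched N \<Delta> b) \<le> Jobj N \<Delta> (\<lambda>i. (b i)\<^sup>2) (sched N \<Delta> b) + e * (\<Sum>i<N. (\<Delta> i)\<^sup>2) / \<omega>"
    using close by (intro Jobj_le_Jobj_add[OF wh \<omega>]) (simp add: abs_minus_commute)
  moreover have "Jobj N \<Delta> (\<lambda>i. (b i)\<^sup>2) (sched N \<Delta> b) \<le> Jobj N \<Delta> (\<lambda>i. (b i)\<^sup>2) w"
    unfolding Jobj_sched_eq by (rule sq_sum_le_Jobj) fact+
  moreover have "Jobj N \<Delta> (\<lambda>i. (b i)\<^sup>2) w \<le> Jobj N \<Delta> c w + e * (\<Sum>i<N. (\<Delta> i)\<^sup>2) / \<omega>"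
    using close by (rule Jobj_le_Jobj_add[OF w \<omega>])
  ultimately have "Jobj N \<Delta> c (sched N \<Delta> b) \<le> Jobj N \<Delta> c w + 2 * (e * (\<Sum>i<N. (\<Delta> i)\<^sup>2) / \<omega>)"
    by linarith
  then show ?thesis by (simp add: mult_ac)
qed

section \<open>Wasserstein distance of pushforwards\<close>

lemma wasserstein1_distr_le:
  fixes P :: "'a::euclidean_space measure" and f g :: "'a \<Rightarrow> 'a"
  assumes P: "prob_space P" "sets P = sets borel"
    and f: "f \<in> borel_measurable borel" and g: "g \<in> borel_measurable borel"
  shows "wasserstein1 (distr P borel f) (distr P borel g) \<le> (\<integral>\<^sup>+x. ennreal (norm (f x - g x)) \<partial>P)"
proof -
  have [measurable]: "f \<in> borel_measurable P" "g \<in> borel_measurable P"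
    using f g by (simp_all add: measurable_cong_sets[OF P(2) refl])
  have fg [measurable]: "(\<lambda>x. (f x, g x)) \<in> measurable P (borel \<Otimes>\<^sub>M borel)" by measurable
  define \<pi> where "\<pi> = distr P (borel \<Otimes>\<^sub>M borel) (\<lambda>x. (f x, g x))"
  have "\<pi> \<in> couplings (distr P borel f) (distr P borel g)"
    unfolding couplings_def \<pi>_def
    using prob_space.prob_space_distr[OF P(1) fg]
    by (simp add: distr_distr comp_def)
  then have "wasserstein1 (distr P borel f) (distr P borel g) \<le> (\<integral>\<^sup>+z. ennreal (norm (fst z - snd z)) \<partial>\<pi>)"
    unfolding wasserstein1_def by (rule INF_lower)
  also have "\<dots> = (\<integral>\<^sup>+x. ennreal (norm (f x - g x)) \<partial>P)"
    unfolding \<pi>_def by (simp add: nn_integral_distr)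
  finally show ?thesis .
qed

lemma wasserstein1_distr_le_Jobj:
  fixes P :: "'a::euclidean_space measure" and S T :: "'a \<Rightarrow> 'a"
  assumes P: "prob_space P" "sets P = sets borel"
    and S: "S \<in> borel_measurable borel" and T: "T \<in> borel_measurable borel"
    and A_int: "\<And>i. i < N \<Longrightarrow> integrable P (A i)"
    and err: "\<And>x. norm (S x - T x) \<le> C * (\<Sum>i<N. A i x * (\<Delta> i)\<^sup>2 / w i)"
  shows "wasserstein1 (distr P borel S) (distr P borel T) \<le> ennreal (C * Jobj N \<Delta> (\<lambda>i. \<integral>x. A i x \<partial>P) w)"
proof -
  have int: "integrable P (\<lambda>x. C * (\<Sum>i<N. A i x * (\<Delta> i)\<^sup>2 / w i))"
    using A_int by auto
  have "wasserstein1 (distr P borel S) (distr P borel T) \<le> (\<integral>\<^sup>+x. ennreal (norm (S x - T x)) \<partial>P)"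
    by (rule wasserstein1_distr_le[OF P S T])
  also have "\<dots> \<le> (\<integral>\<^sup>+x. ennreal (C * (\<Sum>i<N. A i x * (\<Delta> i)\<^sup>2 / w i)) \<partial>P)"
    by (intro nn_integral_mono ennreal_leI err)
  also have "\<dots> = ennreal (\<integral>x. C * (\<Sum>i<N. A i x * (\<Delta> i)\<^sup>2 / w i) \<partial>P)"
    using int err[THEN order_trans[OF norm_ge_zero]] by (intro nn_integral_eq_integral) auto
  also have "(\<integral>x. C * (\<Sum>i<N. A i x * (\<Delta> i)\<^sup>2 / w i) \<partial>P) = C * Jobj N \<Delta> (\<lambda>i. \<integral>x. A i x \<partial>P) w"
    using A_int by (simp add: Jobj_def integral_sum)
  finally show ?thesis .
qed

theorem theorem2:
  fixes p0 :: "'a::euclidean_space measure"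
    and N M :: nat
    and \<tau> :: "nat \<Rightarrow> real"
    and A :: "nat \<Rightarrow> 'a \<Rightarrow> real"
    and K :: "nat \<Rightarrow> nat \<Rightarrow> real"
    and \<epsilon>a \<omega> R \<nu> Gmax B CEul \<delta> :: real
    and \<Omega> :: "'b measure"
    and X :: "nat \<Rightarrow> 'b \<Rightarrow> 'a"
    and T :: "'a \<Rightarrow> 'a"
    and Tw :: "(nat \<Rightarrow> real) \<Rightarrow> 'a \<Rightarrow> 'a"
    and wstar :: "nat \<Rightarrow> real"
  defines "\<Delta> \<equiv> gstep \<tau>"
    and "Acal \<equiv> (\<lambda>i. \<integral>x. A i x \<partial>p0)"
    and "bhat \<equiv> (\<lambda>\<xi>. smooth N K (gfun \<epsilon>a (emp_mean M A X \<xi>)))"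
    and "bstar \<equiv> smooth N K (gfun \<epsilon>a (\<lambda>i. \<integral>x. A i x \<partial>p0))"
  assumes p0: "prob_space p0" "sets p0 = sets borel"
    and N: "N \<ge> 1"
    and grid: "\<tau> 0 = 0" "\<tau> N = 1" "\<And>i. i < N \<Longrightarrow> \<tau> i < \<tau> (Suc i)"
    and A_meas: "\<And>i. i < N \<Longrightarrow> A i \<in> borel_measurable borel"
    and A_nonneg: "\<And>i x. i < N \<Longrightarrow> A i x \<ge> 0"
    and A_int: "\<And>i. i < N \<Longrightarrow> integrable p0 (A i)"
    and eps: "\<epsilon>a > 0"
    and K_nonneg: "\<And>i l. i < N \<Longrightarrow> l < N \<Longrightarrow> K i l \<ge> 0"
    and K_sum: "\<And>i. i < N \<Longrightarrow> (\<Sum>l<N. K i l) = 1"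
    and omega: "0 < \<omega>" "\<omega> < 1 / real N"
    and wstar: "wstar \<in> schedules N \<omega>"
      "\<And>w. w \<in> schedules N \<omega> \<Longrightarrow> Jobj N \<Delta> Acal wstar \<le> Jobj N \<Delta> Acal w"
    and T_meas: "T \<in> borel_measurable borel"
    and Tw_meas: "\<And>w. w \<in> schedules N \<omega> \<Longrightarrow> Tw w \<in> borel_measurable borel"
    and B: "B > 0" and CEul: "CEul > 0"
    and M: "M \<ge> 1"
    and A1: "prob_space \<Omega>"
      "\<And>m. m \<in> {1..M} \<Longrightarrow> X m \<in> measurable \<Omega> borel"
      "\<And>m. m \<in> {1..M} \<Longrightarrow> distr \<Omega> borel (X m) = p0"
      "prob_space.indep_vars \<Omega> (\<lambda>_. borel) X {1..M}"
    and A2: "R > 0" "\<nu> > 0"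
      "\<And>i. i < N \<Longrightarrow> (AE x in p0. \<bar>A i x - Acal i\<bar> \<le> R)"
      "\<And>i. i < N \<Longrightarrow> (\<integral>x. (A i x - Acal i)\<^sup>2 \<partial>p0) \<le> \<nu>\<^sup>2"
    and A3: "\<And>\<xi>. \<xi> \<in> space \<Omega> \<Longrightarrow> sched N \<Delta> (bhat \<xi>) \<in> schedules N \<omega>"
      "\<exists>w. (\<forall>i<N. w i > 0) \<and> (\<Sum>i<N. w i) = 1 \<and>
           (\<forall>v. (\<forall>i<N. v i > 0) \<and> (\<Sum>i<N. v i) = 1 \<longrightarrow> Jobj N \<Delta> (\<lambda>i. (bstar i)\<^sup>2) w \<le> Jobj N \<Delta> (\<lambda>i. (bstar i)\<^sup>2) v) \<and>
           w \<in> schedules N \<omega>"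
      "Gmax > 0"
      "\<And>\<xi> i. \<xi> \<in> space \<Omega> \<Longrightarrow> i < N \<Longrightarrow> 0 \<le> bhat \<xi> i \<and> bhat \<xi> i \<le> Gmax"
      "\<And>i. i < N \<Longrightarrow> 0 \<le> bstar i \<and> bstar i \<le> Gmax"
    and A4: "\<And>w x. w \<in> schedules N \<omega> \<Longrightarrow>
       norm (Tw w x - T x) \<le> CEul / B * (\<Sum>i<N. A i x * (\<Delta> i)\<^sup>2 / w i)"
    and delta: "0 < \<delta>" "\<delta> < 1"
  shows "\<exists>E \<in> prob_space.events \<Omega>. prob_space.prob \<Omega> E \<ge> 1 - \<delta> \<and>
    (\<forall>\<xi>\<in>E. wasserstein1 (distr p0 borel (Tw (sched N \<Delta> (bhat \<xi>)))) (distr p0 borel T)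
        \<le> ennreal (CEul / B * (Jobj N \<Delta> Acal wstar + 2 * (\<Sum>i<N. (\<Delta> i)\<^sup>2) / \<omega> *
          (2 * Gmax * (etaM \<nu> R N M \<delta> / (2 * sqrt \<epsilon>a))
           + Max ((\<lambda>i. \<bar>(bstar i)\<^sup>2 - Acal i\<bar>) ` {..<N})))))"
proof -
  note Acal_def = assms(2) and bhat_def = assms(3) and bstar_def = assms(4)
  interpret \<Omega>: prob_space \<Omega> by (rule A1(1))
  define e where "e = 2 * Gmax * (etaM \<nu> R N M \<delta> / (2 * sqrt \<epsilon>a))
    + Max ((\<lambda>i. \<bar>(bstar i)\<^sup>2 - Acal i\<bar>) ` {..<N})"
  have Acal_nonneg: "Acal i \<ge> 0" if "i < N" for i
    unfolding Acal_def using A_nonneg[OF that] by (simp add: integral_nonneg)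
  have \<delta>_lt: "\<delta> < 2 * real N" using delta N by simp
  obtain E where E: "E \<in> \<Omega>.events" "\<Omega>.prob E \<ge> 1 - \<delta>"
    and sample_close: "\<And>\<xi> i. \<xi> \<in> E \<Longrightarrow> i < N \<Longrightarrow> \<bar>emp_mean M A X \<xi> i - Acal i\<bar> \<le> etaM \<nu> R N M \<delta>"
    using \<Omega>.emp_mean_uniform_deviation[where A = A and N = N and P = p0, OF M A1(3,4) A_meas A2(3,4)[unfolded Acal_def] A2(1,2) delta(1) \<delta>_lt]
    by (auto simp: Acal_def)
  have "wasserstein1 (distr p0 borel (Tw (sched N \<Delta> (bhat \<xi>)))) (distr p0 borel T)
      \<le> ennreal (CEul / B * (Jobj N \<Delta> Acal wstar + 2 * (\<Sum>i<N. (\<Delta> i)\<^sup>2) / \<omega> * e))"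
    if "\<xi> \<in> E" for \<xi>
  proof -
    have \<xi>: "\<xi> \<in> space \<Omega>" using sets.sets_into_space[OF E(1)] that by blast
    have "\<bar>(bhat \<xi> i)\<^sup>2 - Acal i\<bar> \<le> e" if i: "i < N" for i
      unfolding e_def bhat_def bstar_def Acal_def[symmetric]
    proof (intro abs_sq_smooth_gfun_le_Max[where K = K and i = i] emp_mean_nonneg Acal_nonneg
        sample_close[OF \<open>\<xi> \<in> E\<close>] eps K_nonneg K_sum i)
    qed (use A3(4)[OF \<xi> i] A3(5)[OF i] A_nonneg in \<open>auto simp: bhat_def bstar_def Acal_def\<close>)
    then have J: "Jobj N \<Delta> Acal (sched N \<Delta> (bhat \<xi>)) \<le> Jobj N \<Delta> Acal wstar + 2 * (\<Sum>i<N. (\<Delta> i)\<^sup>2) / \<omega> * e"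
      by (rule Jobj_sched_le[OF A3(1)[OF \<xi>] wstar(1) omega(1)])
    have "wasserstein1 (distr p0 borel (Tw (sched N \<Delta> (bhat \<xi>)))) (distr p0 borel T)
        \<le> ennreal (CEul / B * Jobj N \<Delta> Acal (sched N \<Delta> (bhat \<xi>)))"
      unfolding Acal_def
      by (rule wasserstein1_distr_le_Jobj[OF p0 Tw_meas[OF A3(1)[OF \<xi>]] T_meas A_int A4[OF A3(1)[OF \<xi>]]])
    also have "\<dots> \<le> ennreal (CEul / B * (Jobj N \<Delta> Acal wstar + 2 * (\<Sum>i<N. (\<Delta> i)\<^sup>2) / \<omega> * e))"
      using J CEul B by (intro ennreal_leI mult_left_mono) auto
    finally show ?thesis .
  qed
  with E show ?thesis unfolding e_def by auto
qed

end
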